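(* Let $s\in(1,2]$ and let $\alpha$ be a cardinal number with $\alpha\geq\aleph_0$. Then none of the sets $H_s[0,1]=\{f\in C[0,1]:\dim_H G_f([0,1])=s\}$, $\overline{B}_s[0,1]=\{f\in C[0,1]:\overline{\dim}_B G_f([0,1])=s\}$, $\underline{B}_s[0,1]=\{f\in C[0,1]:\underline{\dim}_B G_f([0,1])=s\}$ and $B_s[0,1]=\{f\in C[0,1]:\dim_B G_f([0,1])=s\}$ is $(\alpha,\beta)$-spaceable, for any cardinal number $\beta$.
   Context: $C[0,1]$ is the real Banach space of real-valued continuous functions on $[0,1]$ with the maximum norm. $G_f(X)=\{(x,f(x)):x\in X\}$. $\dim_H$, $\overline{\dim}_B$, $\underline{\dim}_B$, $\dim_B$ denote Hausdorff, upper box, lower box and box dimension ($\dim_B$ being defined when lower and upper box dimensions coincide). For cardinals $\alpha<\beta$, a subset $A$ of a topological vector space is $\alpha$-lineable if there is an $\alpha$-dimensional subspace $M\subseteq A\cup\{0\}$, and $(\alpha,\beta)$-spaceable if it is $\alpha$-lineable and every $\alpha$-dimensional subspace $W_\alpha\subseteq A\cup\{0\}$ is contained in a closed $\beta$-dimensional subspace $W_\beta\subseteq A\cup\{0\}$. *)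

theory Defs
  imports "HOL-Analysis.Analysis" "HOL-Library.Equipollence"
begin

definition hausdorff_pre :: "real \<Rightarrow> real \<Rightarrow> 'a::metric_space set \<Rightarrow> ennreal" where
  "hausdorff_pre s \<delta> E =
     (INF U \<in> {U :: nat \<Rightarrow> 'a set. E \<subseteq> (\<Union>i. U i) \<and> (\<forall>i. bounded (U i) \<and> diameter (U i) \<le> \<delta>)}.
        (\<Sum>i. ennreal (diameter (U i) powr s)))"

definition hausdorff_measure :: "real \<Rightarrow> 'a::metric_space set \<Rightarrow> ennreal" where
  "hausdorff_measure s E = (SUP \<delta> \<in> {0<..}. hausdorff_pre s \<delta> E)"

definition hausdorff_dim :: "'a::metric_space set \<Rightarrow> ereal" where
  "hausdorff_dim E = Inf {ereal s | s. 0 < s \<and> hausdorff_measure s E = 0}"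

definition cover_num :: "real \<Rightarrow> 'a::metric_space set \<Rightarrow> nat" where
  "cover_num \<delta> F = Inf {card C | C. finite C \<and> F \<subseteq> \<Union>C \<and> (\<forall>U\<in>C. bounded U \<and> diameter U \<le> \<delta>)}"

definition upper_box_dim :: "'a::metric_space set \<Rightarrow> ereal" where
  "upper_box_dim F = Limsup (at_right 0) (\<lambda>\<delta>. ereal (ln (real (cover_num \<delta> F)) / - ln \<delta>))"

definition lower_box_dim :: "'a::metric_space set \<Rightarrow> ereal" where
  "lower_box_dim F = Liminf (at_right 0) (\<lambda>\<delta>. ereal (ln (real (cover_num \<delta> F)) / - ln \<delta>))"

text \<open>C[0,1] is modelled (isometrically and linearly) as the closed subspace of bounded
  continuous functions on the reals that are constant outside [0,1], i.e. satisfy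
  f x = f (clamp x); restriction to [0,1] is a linear isometric bijection onto C[0,1]
  with the maximum norm.\<close>
definition C01 :: "(real \<Rightarrow>\<^sub>C real) set" where
  "C01 = {f. \<forall>x. apply_bcontfun f x = apply_bcontfun f (max 0 (min 1 x))}"

definition graph_on :: "(real \<Rightarrow> real) \<Rightarrow> real set \<Rightarrow> (real \<times> real) set" where
  "graph_on f X = {(x, f x) | x. x \<in> X}"

definition H_set :: "real \<Rightarrow> (real \<Rightarrow>\<^sub>C real) set" where
  "H_set s = {f \<in> C01. hausdorff_dim (graph_on (apply_bcontfun f) {0..1}) = ereal s}"

definition Bupper_set :: "real \<Rightarrow> (real \<Rightarrow>\<^sub>C real) set" where
  "Bupper_set s = {f \<in> C01. upper_box_dim (graph_on (apply_bcontfun f) {0..1}) = ereal s}"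

definition Blower_set :: "real \<Rightarrow> (real \<Rightarrow>\<^sub>C real) set" where
  "Blower_set s = {f \<in> C01. lower_box_dim (graph_on (apply_bcontfun f) {0..1}) = ereal s}"

definition B_set :: "real \<Rightarrow> (real \<Rightarrow>\<^sub>C real) set" where
  "B_set s = {f \<in> C01. lower_box_dim (graph_on (apply_bcontfun f) {0..1}) = ereal s
                    \<and> upper_box_dim (graph_on (apply_bcontfun f) {0..1}) = ereal s}"

section \<open>Lineability and spaceability (cardinals represented by sets, up to equipollence)\<close>

definition has_hamel_dim :: "'v::real_vector set \<Rightarrow> 'c set \<Rightarrow> bool" where
  "has_hamel_dim W A \<longleftrightarrow> (\<exists>B. B \<subseteq> W \<and> independent B \<and> span B = W \<and> B \<approx> A)"

definition lineable :: "'v::real_vector set \<Rightarrow> 'c set \<Rightarrow> bool" where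
  "lineable S A \<longleftrightarrow> (\<exists>M. subspace M \<and> M \<subseteq> S \<union> {0} \<and> has_hamel_dim M A)"

definition spaceable :: "'v::real_normed_vector set \<Rightarrow> 'c set \<Rightarrow> 'd set \<Rightarrow> bool" where
  "spaceable S A B \<longleftrightarrow> lineable S A \<and>
     (\<forall>W. subspace W \<and> W \<subseteq> S \<union> {0} \<and> has_hamel_dim W A \<longrightarrow>
        (\<exists>V. subspace V \<and> closed V \<and> W \<subseteq> V \<and> V \<subseteq> S \<union> {0} \<and> has_hamel_dim V B))"

end

theory Submission
  imports Defs "HOL-Real_Asymp.Real_Asymp"
begin

text \<open>Each of the four sets S is invariant under adding constants, and it does not contain 0,
  because the graph of 0 is a segment, all of whose dimensions are 1 < s. For such S, take an
  infinite-dimensional subspace M \<subseteq> S \<union> {0} and a discontinuous linear functional l on M.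
  The sheared subspace {x + l x \<cdot> 1 | x \<in> M} still lies in S \<union> {0} and has the same dimension,
  but its closure contains the constant 1 (the limit of w n + 1, where w n \<rightarrow> 0 and l (w n) = 1),
  whereas 1 \<notin> S. So no closed subspace of S \<union> {0} contains it, whatever its dimension.\<close>

lemma has_hamel_dim_linear_image:
  assumes "linear L" "inj_on L M" "has_hamel_dim M A"
  shows "has_hamel_dim (L ` M) A"
proof -
  obtain C where C: "C \<subseteq> M" "independent C" "span C = M" "C \<approx> A"
    using assms(3) unfolding has_hamel_dim_def by blast
  have "independent (L ` C)"
    using linear_independent_injective_image[OF assms(1) C(2)] assms(2) C(3) by simp
  moreover have "span (L ` C) = L ` M"
    using span_linear_image[OF assms(1)] C(3) by simp
  moreover have "L ` C \<approx> A"
    by (rule eqpoll_trans[OF inj_on_image_eqpoll_self[OF inj_on_subset[OF assms(2) C(1)]] C(4)])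
  moreover have "L ` C \<subseteq> L ` M"
    using C(1) by (rule image_mono)
  ultimately show ?thesis
    unfolding has_hamel_dim_def by blast
qed

lemma independent_infinite_obtains_discontinuous_functional:
  fixes C :: "'v::real_normed_vector set"
  assumes "independent C" "infinite C"
  obtains l :: "'v \<Rightarrow> real" and w :: "nat \<Rightarrow> 'v"
  where "linear l" "w \<longlonglongrightarrow> 0" "\<And>n. w n \<in> span C" "\<And>n. l (w n) = 1"
proof -
  obtain b :: "nat \<Rightarrow> 'v" where b: "inj b" "range b \<subseteq> C"
    using infinite_countable_subset[OF assms(2)] by blast
  then have b_in: "b n \<in> C" for n
    by blast
  have b_nonzero: "b n \<noteq> 0" for n
    using b_in[of n] assms(1) dependent_zero by metis
  obtain l where l: "linear l" "\<forall>x\<in>C. l x = real (Suc (inv b x)) * norm x"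
    using linear_independent_extend[OF assms(1), of "\<lambda>x. real (Suc (inv b x)) * norm x"] by blast
  have l_b: "l (b n) = real (Suc n) * norm (b n)" for n
    using l(2) b_in[of n] inv_f_f[OF b(1)] by simp
  define w where "w n = (1 / (real (Suc n) * norm (b n))) *\<^sub>R b n" for n
  have "l (w n) = 1" for n
    using b_nonzero[of n] by (simp add: w_def linear_scale[OF l(1)] l_b)
  moreover have "w \<longlonglongrightarrow> 0"
  proof -
    have "norm (w n) = 1 / real (Suc n)" for n
      using b_nonzero[of n] by (simp add: w_def)
    then have "(\<lambda>n. norm (w n)) \<longlonglongrightarrow> 0"
      using LIMSEQ_Suc[OF lim_inverse_n'] by simp
    then show ?thesis
      by (simp only: tendsto_norm_zero_iff)
  qed
  moreover have "w n \<in> span C" for n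
    unfolding w_def by (intro span_mul span_base b_in)
  ultimately show ?thesis
    using that l(1) by blast
qed

lemma shift_invariant_shear_image:
  fixes S :: "'v::real_vector set" and l :: "'v \<Rightarrow> real"
  assumes shift: "\<And>f c. f \<in> S \<Longrightarrow> f + c *\<^sub>R g \<in> S" and zero: "0 \<notin> S"
    and M: "subspace M" "M \<subseteq> S \<union> {0}" "has_hamel_dim M A" and l: "linear l"
  defines "L x \<equiv> x + l x *\<^sub>R g"
  shows "subspace (L ` M)" "L ` M \<subseteq> S \<union> {0}" "has_hamel_dim (L ` M) A"
proof -
  have "linear L"
    unfolding L_def
    by (rule linearI) (simp_all add: linear_add[OF l] linear_scale[OF l] algebra_simps)
  then show "subspace (L ` M)"
    using M(1) by (rule linear_subspace_image)
  show "L ` M \<subseteq> S \<union> {0}"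
  proof
    fix y assume "y \<in> L ` M"
    then obtain x where "x \<in> M" "y = L x"
      by blast
    then show "y \<in> S \<union> {0}"
      using M(2) shift linear_0[OF \<open>linear L\<close>] by (cases "x = 0") (auto simp: L_def)
  qed
  have multiple_notin: "c *\<^sub>R g \<notin> S" for c
    using shift[of "c *\<^sub>R g" "- c"] zero by auto
  have "inj_on L M"
  proof (rule inj_onI)
    fix x y assume "x \<in> M" "y \<in> M" "L x = L y"
    then have "x - y = (- l (x - y)) *\<^sub>R g" "x - y \<in> M"
      using M(1) by (simp_all add: L_def linear_diff[OF l] algebra_simps subspace_diff)
    then show "x = y"
      using M(2) multiple_notin by (metis UnE singletonD right_minus_eq subsetD)
  qed
  then show "has_hamel_dim (L ` M) A"
    using has_hamel_dim_linear_image[OF \<open>linear L\<close> _ M(3)] by blast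
qed

lemma not_spaceable_if_shift_invariant:
  fixes S :: "'v::real_normed_vector set" and A :: "'a set" and B :: "'b set"
  assumes shift: "\<And>f c. f \<in> S \<Longrightarrow> f + c *\<^sub>R g \<in> S"
    and zero: "0 \<notin> S" and "g \<noteq> 0" and "infinite A"
  shows "\<not> spaceable S A B"
proof
  assume spaceable: "spaceable S A B"
  then have "lineable S A"
    by (simp add: spaceable_def)
  then obtain M where M: "subspace M" "M \<subseteq> S \<union> {0}" "has_hamel_dim M A"
    unfolding lineable_def by blast
  then obtain C where C: "independent C" "span C = M" "C \<approx> A"
    unfolding has_hamel_dim_def by blast
  have "infinite C"
    using eqpoll_finite_iff[OF C(3)] \<open>infinite A\<close> by simp
  obtain l :: "'v \<Rightarrow> real" and w
    where l: "linear l" and w: "w \<longlonglongrightarrow> 0" "\<And>n. w n \<in> span C" "\<And>n. l (w n) = 1"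
    using independent_infinite_obtains_discontinuous_functional[OF C(1) \<open>infinite C\<close>] by blast
  define L where "L x = x + l x *\<^sub>R g" for x
  obtain V where V: "closed V" "L ` M \<subseteq> V" "V \<subseteq> S \<union> {0}"
    using spaceable shift_invariant_shear_image[OF shift zero M l] unfolding spaceable_def L_def by blast
  have "L (w n) \<in> V" for n
    using V(2) w(2) C(2) by blast
  moreover have "(\<lambda>n. L (w n)) \<longlonglongrightarrow> g"
    using tendsto_add[OF w(1) tendsto_const[of g]] by (simp add: L_def w(3))
  ultimately have "g \<in> V"
    by (rule closed_sequentially[OF V(1)])
  then have "g \<in> S"
    using V(3) \<open>g \<noteq> 0\<close> by blast
  then show False
    using shift[of g "- 1"] zero by simp
qed

lemma diameter_translation:
  fixes v :: "'a::real_normed_vector"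
  shows "diameter ((+) v ` U) = diameter U"
proof -
  have "(+) v ` U \<times> (+) v ` U = map_prod ((+) v) ((+) v) ` (U \<times> U)"
    by (simp add: map_prod_surj_on)
  moreover have "(\<lambda>(x, y). dist x y) \<circ> map_prod ((+) v) ((+) v) = (\<lambda>(x, y). dist x y)"
    by (auto simp: fun_eq_iff)
  ultimately show ?thesis
    by (simp add: diameter_def image_comp)
qed

lemma hausdorff_pre_translation:
  fixes v :: "'a::real_normed_vector"
  shows "hausdorff_pre s \<delta> ((+) v ` E) = hausdorff_pre s \<delta> E"
proof -
  define covers where
    "covers F = {U :: nat \<Rightarrow> 'a set. F \<subseteq> (\<Union>i. U i) \<and> (\<forall>i. bounded (U i) \<and> diameter (U i) \<le> \<delta>)}" for F
  have le: "hausdorff_pre s \<delta> ((+) u ` F) \<le> hausdorff_pre s \<delta> F" for u :: 'a and F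
    unfolding hausdorff_pre_def covers_def[symmetric]
  proof (rule INF_mono)
    fix U assume U: "U \<in> covers F"
    then have "(+) u ` F \<subseteq> (\<Union>i. (+) u ` U i)"
      unfolding covers_def by blast
    with U have "(\<lambda>i. (+) u ` U i) \<in> covers ((+) u ` F)"
      by (simp add: covers_def diameter_translation bounded_translation)
    then show "\<exists>U'\<in>covers ((+) u ` F).
        (\<Sum>i. ennreal (diameter (U' i) powr s)) \<le> (\<Sum>i. ennreal (diameter (U i) powr s))"
      by (rule bexI[rotated]) (simp add: diameter_translation)
  qed
  have "hausdorff_pre s \<delta> E = hausdorff_pre s \<delta> ((+) (- v) ` (+) v ` E)"
    by (simp add: image_image)
  then show ?thesis
    using le[of v E] le[of "- v" "(+) v ` E"] by (simp add: antisym)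
qed

lemma hausdorff_dim_translation:
  fixes v :: "'a::real_normed_vector"
  shows "hausdorff_dim ((+) v ` E) = hausdorff_dim E"
  unfolding hausdorff_dim_def hausdorff_measure_def hausdorff_pre_translation ..

lemma cover_num_translation:
  fixes v :: "'a::real_normed_vector"
  shows "cover_num \<delta> ((+) v ` F) = cover_num \<delta> F"
proof -
  define sizes where "sizes F = {card C | C. finite C \<and> F \<subseteq> \<Union>C \<and> (\<forall>U\<in>C. bounded U \<and> diameter U \<le> \<delta>)}"
    for F :: "'a set"
  have sub: "sizes F \<subseteq> sizes ((+) u ` F)" for u F
  proof
    fix k assume "k \<in> sizes F"
    then obtain C where C: "k = card C" "finite C" "F \<subseteq> \<Union>C" "\<forall>U\<in>C. bounded U \<and> diameter U \<le> \<delta>"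
      unfolding sizes_def by blast
    have "inj_on ((`) ((+) u)) C"
      by (rule inj_onI) (simp add: inj_image_eq_iff)
    then have "card ((`) ((+) u) ` C) = k"
      using C(1) by (simp add: card_image)
    moreover have "(+) u ` F \<subseteq> \<Union>((`) ((+) u) ` C)"
      using C(3) by blast
    ultimately show "k \<in> sizes ((+) u ` F)"
      unfolding sizes_def using C(2,4) by (force simp: diameter_translation bounded_translation)
  qed
  have "sizes F = sizes ((+) (- v) ` (+) v ` F)"
    by (simp add: image_image)
  then have "sizes ((+) v ` F) = sizes F"
    using sub[of F v] sub[of "(+) v ` F" "- v"] by blast
  then show ?thesis
    by (simp add: cover_num_def sizes_def)
qed

lemma upper_box_dim_translation:
  fixes v :: "'a::real_normed_vector"
  shows "upper_box_dim ((+) v ` F) = upper_box_dim F"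
  unfolding upper_box_dim_def cover_num_translation ..

lemma lower_box_dim_translation:
  fixes v :: "'a::real_normed_vector"
  shows "lower_box_dim ((+) v ` F) = lower_box_dim F"
  unfolding lower_box_dim_def cover_num_translation ..

lemma cover_num_le_card:
  assumes "finite C" "F \<subseteq> \<Union>C" "\<forall>U\<in>C. bounded U \<and> diameter U \<le> \<delta>"
  shows "cover_num \<delta> F \<le> card C"
  unfolding cover_num_def using assms by (intro cInf_lower) auto

lemma hausdorff_pre_le_finite_cover:
  assumes "finite C" "F \<subseteq> \<Union>C" "\<forall>U\<in>C. bounded U \<and> diameter U \<le> \<delta>" "0 \<le> \<delta>" "0 \<le> t"
  shows "hausdorff_pre t \<delta> F \<le> ennreal (card C * \<delta> powr t)"
proof -
  obtain xs where xs: "set xs = C" "distinct xs"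
    using finite_distinct_list[OF assms(1)] by blast
  define U where "U i = (if i < length xs then xs ! i else {})" for i
  \<comment> \<open>padding with empty sets costs nothing, as \<open>0 powr t = 0\<close> even for \<open>t = 0\<close>\<close>
  have U_in: "U i \<in> C" if "i < length xs" for i
    using that by (simp add: U_def flip: xs(1))
  have "U \<in> {U. F \<subseteq> (\<Union>i. U i) \<and> (\<forall>i. bounded (U i) \<and> diameter (U i) \<le> \<delta>)}"
  proof -
    have "F \<subseteq> (\<Union>i. U i)"
      using assms(2) xs(1) by (force simp: U_def set_conv_nth)
    moreover have "bounded (U i) \<and> diameter (U i) \<le> \<delta>" for i
      using assms(3,4) U_in[of i] by (cases "i < length xs") (auto simp: U_def)
    ultimately show ?thesis
      by simp
  qed
  then have "hausdorff_pre t \<delta> F \<le> (\<Sum>i. ennreal (diameter (U i) powr t))"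
    unfolding hausdorff_pre_def by (rule INF_lower)
  also have "\<dots> = (\<Sum>i<length xs. ennreal (diameter (U i) powr t))"
    by (rule suminf_finite) (auto simp: U_def)
  also have "\<dots> \<le> of_nat (card {..<length xs}) * ennreal (\<delta> powr t)"
    using assms(3,5) U_in
    by (intro sum_bounded_above ennreal_leI powr_mono2) (auto simp: diameter_ge_0)
  also have "\<dots> = ennreal (card C * \<delta> powr t)"
    using xs distinct_card[OF xs(2)] by (simp add: ennreal_mult' ennreal_of_nat_eq_real_of_nat)
  finally show ?thesis .
qed

lemma hausdorff_pre_antimono:
  "\<delta>' \<le> \<delta> \<Longrightarrow> hausdorff_pre s \<delta> E \<le> hausdorff_pre s \<delta>' E"
  unfolding hausdorff_pre_def by (rule INF_superset_mono) (auto intro: order_trans)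

definition unit_segment :: "(real \<times> real) set" where
  "unit_segment = {0..1} \<times> {0}"

lemma unit_segment_cover_balls:
  assumes "0 < n"
  shows "unit_segment \<subseteq> (\<Union>i\<le>n. cball (real i / real n, 0) (1 / real n))"
proof
  fix p assume "p \<in> unit_segment"
  then obtain x where x: "0 \<le> x" "x \<le> 1" "p = (x, 0)"
    by (auto simp: unit_segment_def)
  define i where "i = nat \<lfloor>x * real n\<rfloor>"
  have "0 \<le> x * real n" "x * real n \<le> real n"
    using x(1,2) by (simp_all add: mult_left_le_one_le)
  then have "real i \<le> x * real n" "x * real n - real i < 1"
    unfolding i_def by linarith+
  then have "i \<le> n"
    using \<open>x * real n \<le> real n\<close> by simp
  have "x - real i / real n = (x * real n - real i) / real n"
    using assms by (simp add: field_simps)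
  also have "\<dots> \<in> {0..1 / real n}"
    using \<open>real i \<le> x * real n\<close> \<open>x * real n - real i < 1\<close>
    by (auto intro: divide_right_mono)
  finally have "dist (real i / real n, 0) p \<le> 1 / real n"
    by (simp add: x(3) dist_Pair_Pair dist_real_def)
  then show "p \<in> (\<Union>i\<le>n. cball (real i / real n, 0) (1 / real n))"
    using \<open>i \<le> n\<close> by auto
qed

lemma unit_segment_cover:
  assumes "0 < \<delta>"
  obtains C :: "(real \<times> real) set set"
  where "finite C" "real (card C) \<le> 2 / \<delta> + 2" "unit_segment \<subseteq> \<Union>C"
    "\<forall>U\<in>C. bounded U \<and> diameter U \<le> \<delta>"
proof
  define n where "n = nat \<lceil>2 / \<delta>\<rceil>"
  have "0 < 2 / \<delta>"
    using assms by simp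
  then have "2 / \<delta> \<le> real n" "real n < 2 / \<delta> + 1"
    unfolding n_def by linarith+
  then have "0 < real n"
    using \<open>0 < 2 / \<delta>\<close> by linarith
  then have "0 < n" "2 / real n \<le> \<delta>"
    using \<open>2 / \<delta> \<le> real n\<close> assms by (auto simp: field_simps)
  define C where "C = (\<lambda>i. cball (real i / real n, 0 :: real) (1 / real n)) ` {..n}"
  show "finite C"
    by (simp add: C_def)
  show "real (card C) \<le> 2 / \<delta> + 2"
  proof -
    have "card C \<le> Suc n"
      using card_image_le[of "{..n}"] by (simp add: C_def)
    then have "real (card C) \<le> real n + 1"
      by (simp flip: of_nat_Suc)
    then show ?thesis
      using \<open>real n < 2 / \<delta> + 1\<close> by linarith
  qed
  show "unit_segment \<subseteq> \<Union>C"
    using unit_segment_cover_balls[OF \<open>0 < n\<close>] by (simp add: C_def)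
  have "diameter (cball (a :: real \<times> real) (1 / real n)) = 2 / real n" for a
    using diameter_cball[of a "1 / real n"] by simp
  then show "\<forall>U\<in>C. bounded U \<and> diameter U \<le> \<delta>"
    using \<open>2 / real n \<le> \<delta>\<close> unfolding C_def by auto
qed

lemma hausdorff_measure_unit_segment:
  assumes "1 < t"
  shows "hausdorff_measure t unit_segment = 0"
proof -
  have "hausdorff_pre t \<delta>\<^sub>0 unit_segment = 0" if "0 < \<delta>\<^sub>0" for \<delta>\<^sub>0
  proof -
    have bound: "eventually (\<lambda>\<delta>. hausdorff_pre t \<delta>\<^sub>0 unit_segment \<le> ennreal ((2 / \<delta> + 2) * \<delta> powr t)) (at_right 0)"
      unfolding eventually_at_right_field
    proof (intro exI[of _ \<delta>\<^sub>0] conjI allI impI)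
      fix \<delta> :: real assume "0 < \<delta>" "\<delta> < \<delta>\<^sub>0"
      obtain C where C: "finite C" "real (card C) \<le> 2 / \<delta> + 2" "unit_segment \<subseteq> \<Union>C"
          "\<forall>U\<in>C. bounded U \<and> diameter U \<le> \<delta>"
        using unit_segment_cover[OF \<open>0 < \<delta>\<close>] by blast
      have "hausdorff_pre t \<delta>\<^sub>0 unit_segment \<le> hausdorff_pre t \<delta> unit_segment"
        using \<open>\<delta> < \<delta>\<^sub>0\<close> by (intro hausdorff_pre_antimono) simp
      also have "\<dots> \<le> ennreal (card C * \<delta> powr t)"
        using C \<open>0 < \<delta>\<close> assms by (intro hausdorff_pre_le_finite_cover) auto
      also have "\<dots> \<le> ennreal ((2 / \<delta> + 2) * \<delta> powr t)"
        using C(2) by (intro ennreal_leI mult_right_mono) auto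
      finally show "hausdorff_pre t \<delta>\<^sub>0 unit_segment \<le> ennreal ((2 / \<delta> + 2) * \<delta> powr t)" .
    qed (use that in simp)
    have "((\<lambda>\<delta>. (2 / \<delta> + 2) * \<delta> powr t) \<longlongrightarrow> 0) (at_right (0::real))"
      using assms by real_asymp
    then have "((\<lambda>\<delta>. ennreal ((2 / \<delta> + 2) * \<delta> powr t)) \<longlongrightarrow> 0) (at_right (0::real))"
      by (metis tendsto_ennrealI ennreal_0)
    from tendsto_lowerbound[OF this bound trivial_limit_at_right_real] show ?thesis
      by simp
  qed
  then show ?thesis
    by (simp add: hausdorff_measure_def)
qed

lemma hausdorff_dim_unit_segment: "hausdorff_dim unit_segment \<le> 1"
proof (rule ereal_le_epsilon2)
  fix e :: real assume "0 < e"
  then have "hausdorff_dim unit_segment \<le> ereal (1 + e)"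
    unfolding hausdorff_dim_def using hausdorff_measure_unit_segment[of "1 + e"]
    by (intro Inf_lower) auto
  then show "hausdorff_dim unit_segment \<le> 1 + ereal e"
    by (simp add: one_ereal_def)
qed

lemma cover_num_unit_segment:
  assumes "0 < \<delta>"
  shows "real (cover_num \<delta> unit_segment) \<le> 2 / \<delta> + 2"
proof -
  obtain C where C: "finite C" "real (card C) \<le> 2 / \<delta> + 2" "unit_segment \<subseteq> \<Union>C"
      "\<forall>U\<in>C. bounded U \<and> diameter U \<le> \<delta>"
    using unit_segment_cover[OF assms] by blast
  have "cover_num \<delta> unit_segment \<le> card C"
    using C by (intro cover_num_le_card) auto
  then show ?thesis
    using C(2) by linarith
qed

lemma upper_box_dim_unit_segment: "upper_box_dim unit_segment \<le> 1"
proof -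
  let ?ratio = "\<lambda>\<delta>. ln (real (cover_num \<delta> unit_segment)) / - ln \<delta>"
  have "eventually (\<lambda>\<delta>. ?ratio \<delta> \<le> ln (2 / \<delta> + 2) / - ln \<delta>) (at_right 0)"
    unfolding eventually_at_right_field
  proof (intro exI[of _ 1] conjI allI impI)
    fix \<delta> :: real assume "0 < \<delta>" "\<delta> < 1"
    then have "ln (real (cover_num \<delta> unit_segment)) \<le> ln (2 / \<delta> + 2)"
      using cover_num_unit_segment[of \<delta>] by (cases "cover_num \<delta> unit_segment = 0") auto
    then show "?ratio \<delta> \<le> ln (2 / \<delta> + 2) / - ln \<delta>"
      using \<open>0 < \<delta>\<close> \<open>\<delta> < 1\<close> by (intro divide_right_mono) auto
  qed simp
  then have "upper_box_dim unit_segment \<le> Limsup (at_right 0) (\<lambda>\<delta>. ereal (ln (2 / \<delta> + 2) / - ln \<delta>))"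
    unfolding upper_box_dim_def by (intro Limsup_mono) (simp add: eventually_mono)
  also have "\<dots> = 1"
  proof -
    have "((\<lambda>\<delta>. ln (2 / \<delta> + 2) / - ln \<delta>) \<longlongrightarrow> 1) (at_right (0::real))"
      by real_asymp
    then show ?thesis
      by (intro lim_imp_Limsup) (auto simp: trivial_limit_at_right_real one_ereal_def)
  qed
  finally show ?thesis .
qed

lemma lower_box_dim_unit_segment: "lower_box_dim unit_segment \<le> 1"
proof -
  have "lower_box_dim unit_segment \<le> upper_box_dim unit_segment"
    unfolding lower_box_dim_def upper_box_dim_def
    by (rule Liminf_le_Limsup) (simp add: trivial_limit_at_right_real)
  then show ?thesis
    using upper_box_dim_unit_segment by simp
qed

lemma graph_on_add_const:
  "graph_on (\<lambda>x. f x + c) X = (+) (0, c) ` graph_on f X"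
  unfolding graph_on_def by force

lemma apply_bcontfun_add_const:
  "apply_bcontfun (f + c *\<^sub>R const_bcontfun 1) = (\<lambda>x. apply_bcontfun f x + c)"
  by (simp add: fun_eq_iff const_bcontfun.rep_eq)

lemma graph_on_zero_unit_interval: "graph_on (\<lambda>_. 0) {0..1} = unit_segment"
  unfolding graph_on_def unit_segment_def by auto

lemma graph_dimension_sets_shift_invariant:
  assumes "S \<in> {H_set s, Bupper_set s, Blower_set s, B_set s}" and "f \<in> S"
  shows "f + c *\<^sub>R const_bcontfun 1 \<in> S"
proof -
  have "f + c *\<^sub>R const_bcontfun 1 \<in> C01" if "f \<in> C01"
    using that by (simp add: C01_def apply_bcontfun_add_const)
  then show ?thesis
    using assms
    by (auto simp: H_set_def Bupper_set_def Blower_set_def B_set_def apply_bcontfun_add_const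
        graph_on_add_const hausdorff_dim_translation upper_box_dim_translation lower_box_dim_translation)
qed

lemma graph_dimension_sets_zero_notin:
  assumes "1 < s" and "S \<in> {H_set s, Bupper_set s, Blower_set s, B_set s}"
  shows "0 \<notin> S"
proof -
  have "apply_bcontfun 0 = (\<lambda>_. 0 :: real)"
    by (simp add: fun_eq_iff)
  then have "graph_on (apply_bcontfun 0) {0..1} = unit_segment"
    by (simp add: graph_on_zero_unit_interval)
  moreover have "(1 :: ereal) < ereal s"
    using assms(1) by (simp add: one_ereal_def)
  ultimately show ?thesis
    using assms(2) hausdorff_dim_unit_segment upper_box_dim_unit_segment lower_box_dim_unit_segment
    by (auto simp: H_set_def Bupper_set_def Blower_set_def B_set_def)
qed

theorem corollary2p11:
  fixes s :: real and A :: "'a set" and B :: "'b set"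
  assumes "1 < s" and "s \<le> 2"
    and "infinite A"
    and "A \<prec> B"
  shows "\<not> spaceable (H_set s) A B \<and> \<not> spaceable (Bupper_set s) A B
       \<and> \<not> spaceable (Blower_set s) A B \<and> \<not> spaceable (B_set s) A B"
proof -
  have "\<not> spaceable S A B" if S: "S \<in> {H_set s, Bupper_set s, Blower_set s, B_set s}" for S
  proof (rule not_spaceable_if_shift_invariant)
    show "f + c *\<^sub>R const_bcontfun 1 \<in> S" if "f \<in> S" for f c
      using graph_dimension_sets_shift_invariant[OF S that] .
    show "0 \<notin> S"
      using graph_dimension_sets_zero_notin[OF \<open>1 < s\<close> S] .
    show "const_bcontfun 1 \<noteq> (0 :: real \<Rightarrow>\<^sub>C real)"
      by (metis const_bcontfun_0_eq_0 const_bcontfun.rep_eq zero_neq_one)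
  qed (fact \<open>infinite A\<close>)
  then show ?thesis
    by simp
qed

end
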